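(* Let $x_{21},\dots,x_{2n}$ be i.i.d. observations of a real random variable $X_2$ with distribution function $F_{X_2}$ and density $f_{X_2}$ bounded away from zero, let $\hat F_{X_2}$ be their empirical distribution function, let $p\ge3$ be a fixed odd integer, and for each $i$ with $(p-1)/2<\mathrm{rank}(x_{2i})\le n-(p-1)/2$ let $$W_i=\Big\{j:\ |\hat F_{X_2}(x_{2j})-\hat F_{X_2}(x_{2i})|\le\frac{p-1}{2n}\Big\}.$$ Then for any Lipschitz continuous function $g$, $$\frac1p\sum_{j=1}^n g(x_{2j})\,I(j\in W_i)-g(x_{2i})=O_p\Big(\frac{1}{\sqrt n}\Big)$$ uniformly in $i$.
   Context: $I(\cdot)$ denotes the indicator function; $\mathrm{rank}(x_{2i})$ is the position of $x_{2i}$ among the ordered sample, so that each $W_i$ consists of the indices of $x_{2i}$ and its $p-1$ nearest neighbours in rank. $O_p(a_n)$ uniformly in $i$ means that the maximum over $i$ of the absolute value, divided by $a_n$, is bounded in probability. *)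

theory Defs
  imports "HOL-Probability.Probability"
begin

definition ecdf :: "(nat \<Rightarrow> real) \<Rightarrow> nat \<Rightarrow> real \<Rightarrow> real" where
  "ecdf x n t = real (card {j \<in> {1..n}. x j \<le> t}) / real n"

definition rank :: "(nat \<Rightarrow> real) \<Rightarrow> nat \<Rightarrow> nat \<Rightarrow> nat" where
  "rank x n i = card {j \<in> {1..n}. x j \<le> x i}"

definition W :: "(nat \<Rightarrow> real) \<Rightarrow> nat \<Rightarrow> nat \<Rightarrow> nat \<Rightarrow> nat set" where
  "W x n p i = {j \<in> {1..n}. \<bar>ecdf x n (x j) - ecdf x n (x i)\<bar> \<le> (real p - 1) / (2 * real n)}"

definition admissible :: "(nat \<Rightarrow> real) \<Rightarrow> nat \<Rightarrow> nat \<Rightarrow> nat set" where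
  "admissible x n p = {i \<in> {1..n}. (real p - 1) / 2 < real (rank x n i)
                                 \<and> real (rank x n i) \<le> real n - (real p - 1) / 2}"

definition local_err :: "(real \<Rightarrow> real) \<Rightarrow> (nat \<Rightarrow> real) \<Rightarrow> nat \<Rightarrow> nat \<Rightarrow> nat \<Rightarrow> real" where
  "local_err g x n p i =
     (1 / real p) * (\<Sum>j\<in>{1..n}. g (x j) * indicator (W x n p i) j) - g (x i)"

definition max_err :: "(real \<Rightarrow> real) \<Rightarrow> (nat \<Rightarrow> real) \<Rightarrow> nat \<Rightarrow> nat \<Rightarrow> real" where
  "max_err g x n p = Max (insert 0 ((\<lambda>i. \<bar>local_err g x n p i\<bar>) ` admissible x n p))"

definition bounded_in_prob :: "'a measure \<Rightarrow> (nat \<Rightarrow> 'a \<Rightarrow> real) \<Rightarrow> bool" where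
  "bounded_in_prob M Y \<longleftrightarrow>
     (\<forall>\<epsilon>>0. \<exists>K. eventually (\<lambda>n. measure M {\<omega> \<in> space M. \<bar>Y n \<omega>\<bar> > K} < \<epsilon>) sequentially)"

definition big_Op :: "'a measure \<Rightarrow> (nat \<Rightarrow> 'a \<Rightarrow> real) \<Rightarrow> (nat \<Rightarrow> real) \<Rightarrow> bool" where
  "big_Op M Y a \<longleftrightarrow> bounded_in_prob M (\<lambda>n \<omega>. Y n \<omega> / a n)"

end

theory Submission
  imports Defs
begin

text \<open>Cut the support [a,b] into m \<approx> 2 L (b - a) \<surd>n bins of width h. If the sample has no ties
and every bin holds at least p sample points, then every j \<in> W i satisfies |x j - x i| \<le> 2h
(a whole bin between x i and x j would put p ranks between them) and W i has exactly p
elements, so the Lipschitz bound gives |local_err| \<le> 2 L h \<le> 1/\<surd>n. Splitting the sample into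
p disjoint blocks of q = n div p observations, a fixed block misses a fixed bin with probability
at most (1 - c h)^q \<le> exp (-c h q); hence the sample fails to be well spread with probability
at most m p exp (-c h q) = O(1/\<surd>n).\<close>

lemma ecdf_eq_rank: "ecdf x n (x j) = real (rank x n j) / real n"
  by (simp add: ecdf_def rank_def)

lemma rank_ge_1: "i \<in> {1..n} \<Longrightarrow> 1 \<le> rank x n i"
proof -
  assume "i \<in> {1..n}"
  then have "{j \<in> {1..n}. x j \<le> x i} \<noteq> {}"
    by auto
  then show ?thesis
    unfolding rank_def by (simp add: Suc_le_eq card_gt_0_iff)
qed

lemma rank_le: "rank x n i \<le> n"
  unfolding rank_def using card_mono[of "{1..n}" "{j \<in> {1..n}. x j \<le> x i}"] by fastforce

lemma rank_eq_add_card_between: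
  assumes "x i \<le> x j"
  shows "rank x n j = rank x n i + card {k\<in>{1..n}. x i < x k \<and> x k \<le> x j}"
proof -
  have "{k\<in>{1..n}. x k \<le> x j} = {k\<in>{1..n}. x k \<le> x i} \<union> {k\<in>{1..n}. x i < x k \<and> x k \<le> x j}"
    using assms by auto
  then show ?thesis
    unfolding rank_def by (simp add: card_Un_disjoint disjoint_iff)
qed

lemma rank_less_rank:
  assumes "j \<in> {1..n}" "x i < x j"
  shows "rank x n i < rank x n j"
proof -
  have "card {k\<in>{1..n}. x i < x k \<and> x k \<le> x j} > 0"
    using assms by (auto simp: card_gt_0_iff)
  then show ?thesis
    using rank_eq_add_card_between[of x i j n] assms by simp
qed

lemma bij_betw_rank:
  assumes "inj_on x {1..n}"
  shows "bij_betw (rank x n) {1..n} {1..n}"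
proof -
  have inj: "inj_on (rank x n) {1..n}"
  proof (rule inj_onI, rule ccontr)
    fix i j assume ij: "i \<in> {1..n}" "j \<in> {1..n}" "rank x n i = rank x n j" "i \<noteq> j"
    then have "x i < x j \<or> x j < x i"
      using assms by (metis inj_onD linorder_neqE_linordered_idom)
    then show False
      using rank_less_rank[of j n x i] rank_less_rank[of i n x j] ij by auto
  qed
  moreover have "rank x n ` {1..n} \<subseteq> {1..n}"
    using rank_ge_1 rank_le by fastforce
  ultimately have "rank x n ` {1..n} = {1..n}"
    by (intro card_subset_eq) (auto simp: card_image)
  with inj show ?thesis
    unfolding bij_betw_def by simp
qed

lemma W_eq_rank_window:
  assumes "n > 0"
  shows "W x n p i = {j\<in>{1..n}. \<bar>real (rank x n j) - real (rank x n i)\<bar> \<le> (real p - 1) / 2}"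
proof -
  have "\<bar>u / real n - v / real n\<bar> \<le> (real p - 1) / (2 * real n) \<longleftrightarrow> \<bar>u - v\<bar> \<le> (real p - 1) / 2"
    for u v :: real
    using assms by (simp add: diff_divide_distrib[symmetric] abs_divide divide_le_cancel
        flip: divide_divide_eq_left)
  then show ?thesis
    unfolding W_def ecdf_eq_rank by simp
qed

lemma card_W:
  assumes inj: "inj_on x {1..n}" and adm: "i \<in> admissible x n p" and "odd p"
  shows "card (W x n p i) = p"
proof -
  obtain q where p: "p = 2 * q + 1"
    using \<open>odd p\<close> by (metis oddE)
  let ?r = "rank x n i"
  have i: "i \<in> {1..n}" and r: "q < ?r" "?r + q \<le> n"
    using adm p unfolding admissible_def by auto
  let ?S = "{?r - q .. ?r + q}"
  have "\<bar>real (rank x n j) - real ?r\<bar> \<le> (real p - 1) / 2 \<longleftrightarrow> rank x n j \<in> ?S" for j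
    using p r by auto
  then have W: "W x n p i = {j\<in>{1..n}. rank x n j \<in> ?S}"
    using i W_eq_rank_window[of n x p i] by simp
  have bij: "bij_betw (rank x n) {1..n} {1..n}"
    by (rule bij_betw_rank[OF inj])
  then have "?S \<subseteq> rank x n ` {1..n}"
    using r unfolding bij_betw_def by auto
  then have "rank x n ` W x n p i = ?S"
    unfolding W by blast
  then have "bij_betw (rank x n) (W x n p i) ?S"
    by (intro bij_betw_subset[OF bij]) (auto simp: W)
  then have "card (W x n p i) = card ?S"
    by (rule bij_betw_same_card)
  also have "\<dots> = p"
    using p r by simp
  finally show ?thesis .
qed

definition bin :: "real \<Rightarrow> real \<Rightarrow> nat \<Rightarrow> real set" where
  "bin a h t = {a + real t * h .. a + real (Suc t) * h}"

definition well_spread :: "(nat \<Rightarrow> real) \<Rightarrow> nat \<Rightarrow> nat \<Rightarrow> real \<Rightarrow> real \<Rightarrow> nat \<Rightarrow> bool" where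
  "well_spread x n p a h m \<longleftrightarrow> inj_on x {1..n} \<and> (\<forall>k\<in>{1..n}. x k \<in> {a .. a + real m * h})
     \<and> (\<forall>t<m. p \<le> card {k\<in>{1..n}. x k \<in> bin a h t})"

lemma rank_add_le_of_far:
  assumes spread: "well_spread x n p a h m" and "h > 0"
    and ij: "i \<in> {1..n}" "j \<in> {1..n}" and far: "x i + 2 * h < x j"
  shows "rank x n i + p \<le> rank x n j"
proof -
  text \<open>The first bin starting to the right of x i lies in the interval (x i, x j].\<close>
  define t where "t = nat \<lfloor>(x i - a) / h\<rfloor> + 1"
  have range: "a \<le> x i" "x j \<le> a + real m * h"
    using spread ij unfolding well_spread_def by auto
  then have t: "real t = \<lfloor>(x i - a) / h\<rfloor> + 1"
    using \<open>h > 0\<close> unfolding t_def by simp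
  have "(x i - a) / h < real t" "real (Suc t) \<le> (x i - a) / h + 2"
    using t by linarith+
  then have lo: "x i < a + real t * h" and hi: "a + real (Suc t) * h \<le> x i + 2 * h"
    using \<open>h > 0\<close> by (simp_all add: field_simps)
  have "real (Suc t) * h < real m * h"
    using hi far range by linarith
  then have "t < m"
    using \<open>h > 0\<close> by (simp add: mult_less_cancel_right)
  then have "p \<le> card {k\<in>{1..n}. x k \<in> bin a h t}"
    using spread unfolding well_spread_def by blast
  also have "\<dots> \<le> card {k\<in>{1..n}. x i < x k \<and> x k \<le> x j}"
    using lo hi far by (intro card_mono) (auto simp: bin_def)
  finally show ?thesis
    using rank_eq_add_card_between[of x i j n] far \<open>h > 0\<close> by simp
qed

lemma abs_local_err_le:
  assumes spread: "well_spread x n p a h m" and "h > 0"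
    and adm: "i \<in> admissible x n p" and "odd p" and lip: "L-lipschitz_on UNIV g"
  shows "\<bar>local_err g x n p i\<bar> \<le> 2 * L * h"
proof -
  have i: "i \<in> {1..n}"
    using adm unfolding admissible_def by auto
  have W_sub: "W x n p i \<subseteq> {1..n}"
    unfolding W_def by auto
  have p: "real p > 0"
    using odd_pos[OF \<open>odd p\<close>] by simp
  have card_W: "card (W x n p i) = p"
    using spread adm \<open>odd p\<close> by (intro card_W) (auto simp: well_spread_def)
  have close: "\<bar>x j - x i\<bar> \<le> 2 * h" if j: "j \<in> W x n p i" for j
  proof (rule ccontr)
    assume "\<not> ?thesis"
    then have "x i + 2 * h < x j \<or> x j + 2 * h < x i"
      by linarith
    then have "rank x n i + p \<le> rank x n j \<or> rank x n j + p \<le> rank x n i"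
      using rank_add_le_of_far[OF spread \<open>h > 0\<close>] i j W_sub by blast
    then have "real (rank x n i) + real p \<le> real (rank x n j) \<or> real (rank x n j) + real p \<le> real (rank x n i)"
      by (metis of_nat_add of_nat_le_iff)
    moreover have "\<bar>real (rank x n j) - real (rank x n i)\<bar> \<le> (real p - 1) / 2"
      using j i W_eq_rank_window[of n x p i] by simp
    ultimately show False
      by (auto simp: abs_le_iff)
  qed
  have "(\<Sum>j\<in>{1..n}. g (x j) * indicator (W x n p i) j) = (\<Sum>j\<in>W x n p i. g (x j))"
    using W_sub by (simp add: sum.If_cases indicator_def Int_absorb1)
  then have "local_err g x n p i = (\<Sum>j\<in>W x n p i. g (x j) - g (x i)) / real p"
    using card_W p unfolding local_err_def by (simp add: sum_subtractf field_simps)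
  then have "\<bar>local_err g x n p i\<bar> \<le> (\<Sum>j\<in>W x n p i. \<bar>g (x j) - g (x i)\<bar>) / real p"
    by (auto intro!: divide_right_mono sum_abs)
  also have "\<dots> \<le> (\<Sum>j\<in>W x n p i. L * (2 * h)) / real p"
  proof (intro divide_right_mono sum_mono)
    fix j assume "j \<in> W x n p i"
    have "\<bar>g (x j) - g (x i)\<bar> \<le> L * \<bar>x j - x i\<bar>"
      using lipschitz_onD[OF lip] by (simp add: dist_real_def)
    also have "\<dots> \<le> L * (2 * h)"
      using close[OF \<open>j \<in> W x n p i\<close>] lipschitz_on_nonneg[OF lip] by (rule mult_left_mono)
    finally show "\<bar>g (x j) - g (x i)\<bar> \<le> L * (2 * h)" .
  qed simp
  also have "\<dots> = 2 * L * h"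
    using card_W p by simp
  finally show ?thesis .
qed

lemma max_err_le:
  assumes "well_spread x n p a h m" "h > 0" "odd p" "L-lipschitz_on UNIV g"
  shows "max_err g x n p \<le> 2 * L * h"
proof -
  have "finite (admissible x n p)"
    unfolding admissible_def by auto
  then show ?thesis
    unfolding max_err_def using abs_local_err_le[OF assms(1,2) _ assms(3,4)]
      lipschitz_on_nonneg[OF assms(4)] \<open>h > 0\<close>
    by (subst Max_le_iff) auto
qed

lemma le_card_of_hit_in_each_block:
  assumes hit: "\<forall>\<sigma><p. \<exists>k\<in>{\<sigma> * q + 1 .. \<sigma> * q + q}. P k" and "p * q \<le> n"
  shows "p \<le> card {k\<in>{1..n}. P k}"
proof -
  obtain K where K: "\<And>\<sigma>. \<sigma> < p \<Longrightarrow> K \<sigma> \<in> {\<sigma> * q + 1 .. \<sigma> * q + q} \<and> P (K \<sigma>)"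
    using hit by metis
  have "K \<sigma> < K \<tau>" if "\<sigma> < \<tau>" "\<tau> < p" for \<sigma> \<tau>
  proof -
    have "K \<sigma> \<le> (\<sigma> + 1) * q"
      using K[of \<sigma>] that by (simp add: add.commute)
    also have "\<dots> \<le> \<tau> * q"
      using that by (intro mult_right_mono) auto
    also have "\<dots> < K \<tau>"
      using K[of \<tau>] that by auto
    finally show ?thesis .
  qed
  then have "inj_on K {..<p}"
    by (metis inj_onI lessThan_iff linorder_neqE_nat order_less_irrefl)
  moreover have "K ` {..<p} \<subseteq> {k\<in>{1..n}. P k}"
  proof (rule image_subsetI)
    fix \<sigma> assume "\<sigma> \<in> {..<p}"
    then have "\<sigma> < p"
      by simp
    then have "\<sigma> * q + q \<le> p * q"
      by (metis add.commute mult_Suc Suc_leI mult_le_mono1)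
    then show "K \<sigma> \<in> {k\<in>{1..n}. P k}"
      using K[OF \<open>\<sigma> < p\<close>] \<open>p * q \<le> n\<close> by auto
  qed
  ultimately show ?thesis
    using card_mono[of "{k\<in>{1..n}. P k}" "K ` {..<p}"] by (simp add: card_image)
qed

lemma well_spread_if_blocks_hit_bins:
  assumes "inj_on x {1..n}" "\<forall>k\<in>{1..n}. x k \<in> {a .. a + real m * h}" "p * q \<le> n"
    and "\<forall>t<m. \<forall>\<sigma><p. \<exists>k\<in>{\<sigma> * q + 1 .. \<sigma> * q + q}. x k \<in> bin a h t"
  shows "well_spread x n p a h m"
  unfolding well_spread_def using assms le_card_of_hit_in_each_block[OF _ assms(3)] by simp

lemma mul_exp_neg_le_div:
  fixes s c d A P q m :: real
  assumes s: "s \<ge> 1" and "c > 0" "d > 0" "P \<ge> 1" "A \<ge> 1"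
    and m: "m > 0" "m \<le> A * s" and q: "q \<ge> s\<^sup>2 / P - 1" and sP: "s\<^sup>2 \<ge> P"
  shows "m * P * exp (- (c * (d / m) * q)) \<le> (2 * A * P * exp (c * d / A) / (c * d / (A * P))\<^sup>2) / s"
proof -
  define E where "E = c * d / (A * P)"
  define C where "C = c * d / A"
  have "E > 0" "C > 0"
    unfolding E_def C_def using assms by simp_all
  have "q \<ge> 0"
    using q sP \<open>P \<ge> 1\<close> by (smt (verit) le_divide_eq_1_pos)
  have "c * (d / (A * s)) * (s\<^sup>2 / P - 1) \<le> c * (d / m) * q"
    using assms \<open>q \<ge> 0\<close> by (intro mult_mono divide_left_mono) (auto simp: field_simps)
  moreover have "c * (d / (A * s)) * (s\<^sup>2 / P - 1) = E * s - C / s"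
    unfolding E_def C_def using assms by (simp add: field_simps power2_eq_square)
  moreover have "C / s \<le> C"
    using s \<open>C > 0\<close> by (simp add: divide_le_eq)
  ultimately have "exp (- (c * (d / m) * q)) \<le> exp C * exp (- (E * s))"
    by (simp flip: exp_add)
  also have "exp (- (E * s)) \<le> 2 / (E * s)\<^sup>2"
  proof -
    have "0 \<le> E * s"
      using \<open>E > 0\<close> s by simp
    then have "(E * s)\<^sup>2 / 2 \<le> exp (E * s)"
      using exp_lower_Taylor_quadratic[of "E * s"] by linarith
    then show ?thesis
      using \<open>E > 0\<close> s by (simp add: exp_minus field_simps)
  qed
  finally have "m * P * exp (- (c * (d / m) * q)) \<le> (A * s) * P * (exp C * (2 / (E * s)\<^sup>2))"
    using assms by (intro mult_mono) auto
  also have "\<dots> = (2 * A * P * exp C / E\<^sup>2) / s"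
    using s \<open>E > 0\<close> by (simp add: field_simps power2_eq_square)
  finally show ?thesis
    unfolding E_def C_def .
qed

locale iid_bounded_density = prob_space M
  for M :: "'a measure" and X :: "nat \<Rightarrow> 'a \<Rightarrow> real" and f :: "real \<Rightarrow> ennreal"
    and a b c :: real +
  assumes indep: "indep_vars (\<lambda>_. borel) X UNIV"
    and distributed: "\<And>k. distributed M lborel (X k) f"
    and a_less_b: "a < b" and c_pos: "c > 0"
    and density_ge: "\<And>x. x \<in> {a..b} \<Longrightarrow> f x \<ge> ennreal c"
    and density_outside: "\<And>x. x \<notin> {a..b} \<Longrightarrow> f x = 0"
begin

lemma X_measurable [measurable]: "X k \<in> borel_measurable M"
  using distributed[of k] unfolding distributed_def measurable_lborel1 by auto

lemma AE_in_support: "AE \<omega> in M. X k \<omega> \<in> {a..b}"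
proof -
  have "emeasure M (X k -` (- {a..b}) \<inter> space M) = (\<integral>\<^sup>+x. f x * indicator (- {a..b}) x \<partial>lborel)"
    by (rule distributed_emeasure[OF distributed]) auto
  also have "\<dots> = (\<integral>\<^sup>+(x::real). 0 \<partial>lborel)"
    using density_outside by (intro nn_integral_cong) (force simp: indicator_def)
  finally show ?thesis
    by (subst AE_iff_measurable[of "X k -` (- {a..b}) \<inter> space M"]) auto
qed

lemma prob_interval_ge:
  assumes "a \<le> s" "s \<le> t" "t \<le> b"
  shows "c * (t - s) \<le> prob (X k -` {s..t} \<inter> space M)"
proof -
  have "ennreal c * ennreal (t - s) = (\<integral>\<^sup>+x. ennreal c * indicator {s..t} x \<partial>lborel)"
    using assms by (simp add: nn_integral_cmult_indicator)
  also have "\<dots> \<le> (\<integral>\<^sup>+x. f x * indicator {s..t} x \<partial>lborel)"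
    using assms density_ge by (intro nn_integral_mono) (auto simp: indicator_def)
  also have "\<dots> = emeasure M (X k -` {s..t} \<inter> space M)"
    by (rule distributed_emeasure[OF distributed, symmetric]) auto
  finally show ?thesis
    using assms c_pos by (simp add: emeasure_eq_measure ennreal_mult[symmetric])
qed

lemma AE_no_tie:
  assumes "j \<noteq> k"
  shows "AE \<omega> in M. X j \<omega> \<noteq> X k \<omega>"
proof -
  have "indep_var borel ((\<lambda>y. y j) \<circ> (\<lambda>\<omega>. restrict (\<lambda>i. X i \<omega>) {j}))
      borel ((\<lambda>y. y k) \<circ> (\<lambda>\<omega>. restrict (\<lambda>i. X i \<omega>) {k}))"
    using assms by (intro indep_var_compose[OF indep_var_restrict[OF indep]]) auto
  then have "indep_var borel (X j) borel (X k)"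
    by (simp add: comp_def)
  then have pair: "distr M borel (X j) \<Otimes>\<^sub>M distr M borel (X k) = distr M (borel \<Otimes>\<^sub>M borel) (\<lambda>\<omega>. (X j \<omega>, X k \<omega>))"
    by (simp add: indep_var_distribution_eq)
  define D where "D = {z :: real \<times> real. fst z = snd z}"
  have D: "D \<in> sets (borel \<Otimes>\<^sub>M borel)"
    unfolding borel_prod D_def by (intro borel_closed closed_Collect_eq continuous_intros)
  have "emeasure M {\<omega>\<in>space M. X j \<omega> = X k \<omega>} = emeasure (distr M (borel \<Otimes>\<^sub>M borel) (\<lambda>\<omega>. (X j \<omega>, X k \<omega>))) D"
    using D by (subst emeasure_distr) (auto simp: D_def vimage_def Int_def conj_commute)
  also have "\<dots> = (\<integral>\<^sup>+u. emeasure (distr M borel (X k)) (Pair u -` D) \<partial>distr M borel (X j))"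
    unfolding pair[symmetric] using D
    by (intro sigma_finite_measure.emeasure_pair_measure_alt prob_space_imp_sigma_finite prob_space_distr)
      auto
  also have "\<dots> = (\<integral>\<^sup>+u. 0 \<partial>distr M borel (X j))"
  proof (intro nn_integral_cong)
    fix u
    have "emeasure (distr M borel (X k)) {u} = emeasure M (X k -` {u} \<inter> space M)"
      by (simp add: emeasure_distr)
    also have "\<dots> = (\<integral>\<^sup>+x. f x * indicator {u} x \<partial>lborel)"
      by (rule distributed_emeasure[OF distributed]) auto
    also have "\<dots> = (\<integral>\<^sup>+(x::real). 0 \<partial>lborel)"
      using AE_lborel_singleton[of u] by (intro nn_integral_cong_AE) (auto elim: AE_mp)
    finally show "emeasure (distr M borel (X k)) (Pair u -` D) = 0"
      by (simp add: D_def vimage_def)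
  qed
  finally show ?thesis
    by (subst AE_iff_measurable[of "{\<omega>\<in>space M. X j \<omega> = X k \<omega>}"]) auto
qed

lemma AE_sample_inj_in_support:
  "AE \<omega> in M. inj_on (\<lambda>k. X k \<omega>) {1..n} \<and> (\<forall>k\<in>{1..n}. X k \<omega> \<in> {a..b})"
proof -
  have "AE \<omega> in M. \<forall>j\<in>{1..n}. \<forall>k\<in>{1..n}. X j \<omega> = X k \<omega> \<longrightarrow> j = k"
  proof (intro AE_finite_allI finite_atLeastAtMost)
    fix j k
    show "AE \<omega> in M. X j \<omega> = X k \<omega> \<longrightarrow> j = k"
    proof (cases "j = k")
      case False
      from AE_no_tie[OF False] show ?thesis
        by (rule eventually_mono) simp
    qed simp
  qed
  moreover have "AE \<omega> in M. \<forall>k\<in>{1..n}. X k \<omega> \<in> {a..b}"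
    by (intro AE_finite_allI AE_in_support) simp
  ultimately show ?thesis
    unfolding inj_on_def by (rule eventually_conj)
qed

lemma measurable_well_spread [measurable]: "Measurable.pred M (\<lambda>\<omega>. well_spread (\<lambda>k. X k \<omega>) n p a h m)"
  unfolding well_spread_def inj_on_def bin_def card_eq_sum sum.inter_filter[OF finite_atLeastAtMost]
  by measurable

lemma prob_block_misses_interval:
  assumes "finite J" "J \<noteq> {}" and st: "a \<le> s" "s \<le> t" "t \<le> b"
  shows "prob (\<Inter>k\<in>J. X k -` (- {s..t}) \<inter> space M) \<le> exp (- (c * (t - s) * real (card J)))"
proof -
  have miss: "prob (X k -` (- {s..t}) \<inter> space M) \<le> 1 - c * (t - s)" for k
  proof -
    have "X k -` (- {s..t}) \<inter> space M = space M - (X k -` {s..t} \<inter> space M)"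
      by auto
    then show ?thesis
      using prob_compl[of "X k -` {s..t} \<inter> space M"] prob_interval_ge[OF st, of k] by simp
  qed
  have "prob (\<Inter>k\<in>J. X k -` (- {s..t}) \<inter> space M) = (\<Prod>k\<in>J. prob (X k -` (- {s..t}) \<inter> space M))"
    using assms by (intro indep_varsD[OF indep]) auto
  also have "\<dots> \<le> (\<Prod>k\<in>J. 1 - c * (t - s))"
    using miss by (intro prod_mono) auto
  also have "\<dots> \<le> exp (- (c * (t - s))) ^ card J"
  proof -
    have "0 \<le> 1 - c * (t - s)"
      using miss[of 0] measure_nonneg[of M "X 0 -` (- {s..t}) \<inter> space M"] by linarith
    then show ?thesis
      using exp_ge_add_one_self[of "- (c * (t - s))"] by (simp add: power_mono)
  qed
  also have "\<dots> = exp (- (c * (t - s) * real (card J)))"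
    by (simp add: exp_of_nat_mult[symmetric] algebra_simps)
  finally show ?thesis .
qed

lemma prob_not_well_spread_le:
  assumes "h > 0" and m: "real m * h = b - a" and "1 \<le> q" "p * q \<le> n"
  shows "prob {\<omega>\<in>space M. \<not> well_spread (\<lambda>k. X k \<omega>) n p a h m}
    \<le> real m * real p * exp (- (c * h * real q))"
proof -
  define block where "block \<sigma> = {\<sigma> * q + 1 .. \<sigma> * q + q}" for \<sigma>
  define V where "V = (\<Union>t<m. \<Union>\<sigma><p. \<Inter>k\<in>block \<sigma>. X k -` (- bin a h t) \<inter> space M)"
  have block: "finite (block \<sigma>)" "block \<sigma> \<noteq> {}" "card (block \<sigma>) = q" for \<sigma>
    using \<open>1 \<le> q\<close> unfolding block_def by auto
  have bin: "a \<le> a + real t * h" "a + real t * h \<le> a + real (Suc t) * h" "a + real (Suc t) * h \<le> b"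
    if "t < m" for t
  proof -
    have "real (Suc t) * h \<le> real m * h"
      using that \<open>h > 0\<close> by (intro mult_right_mono) auto
    then show "a + real (Suc t) * h \<le> b"
      using m by simp
  qed (use \<open>h > 0\<close> in auto)
  have miss_bin: "X k -` (- bin a h t) \<inter> space M \<in> sets M" for k t
    by (rule measurable_sets[OF X_measurable]) (auto simp: bin_def)
  have V: "V \<in> sets M"
    unfolding V_def using block miss_bin by (intro sets.finite_UN sets.finite_INT) auto
  have "AE \<omega> in M. \<omega> \<in> {\<omega>\<in>space M. \<not> well_spread (\<lambda>k. X k \<omega>) n p a h m} \<longrightarrow> \<omega> \<in> V"
    using AE_sample_inj_in_support[of n]
  proof eventually_elim
    case (elim \<omega>)
    show ?case
    proof (rule impI, rule ccontr)
      assume bad: "\<omega> \<in> {\<omega>\<in>space M. \<not> well_spread (\<lambda>k. X k \<omega>) n p a h m}" and "\<omega> \<notin> V"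
      have "\<forall>t<m. \<forall>\<sigma><p. \<exists>k\<in>{\<sigma> * q + 1 .. \<sigma> * q + q}. X k \<omega> \<in> bin a h t"
      proof (intro allI impI, rule ccontr)
        fix t \<sigma> assume "t < m" "\<sigma> < p" "\<not> (\<exists>k\<in>{\<sigma> * q + 1 .. \<sigma> * q + q}. X k \<omega> \<in> bin a h t)"
        then have "\<omega> \<in> (\<Inter>k\<in>block \<sigma>. X k -` (- bin a h t) \<inter> space M)"
          using bad unfolding block_def by auto
        then have "\<omega> \<in> V"
          unfolding V_def using \<open>t < m\<close> \<open>\<sigma> < p\<close> by (intro UN_I) auto
        with \<open>\<omega> \<notin> V\<close> show False ..
      qed
      moreover have "\<forall>k\<in>{1..n}. X k \<omega> \<in> {a .. a + real m * h}"
        using elim m by simp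
      ultimately have "well_spread (\<lambda>k. X k \<omega>) n p a h m"
        using elim \<open>p * q \<le> n\<close> by (intro well_spread_if_blocks_hit_bins) simp_all
      with bad show False
        by simp
    qed
  qed
  then have "prob {\<omega>\<in>space M. \<not> well_spread (\<lambda>k. X k \<omega>) n p a h m} \<le> prob V"
    using V by (rule finite_measure_mono_AE)
  also have "\<dots> \<le> (\<Sum>t<m. \<Sum>\<sigma><p. prob (\<Inter>k\<in>block \<sigma>. X k -` (- bin a h t) \<inter> space M))"
    unfolding V_def using block miss_bin
    by (intro order_trans[OF measure_UNION_le] sum_mono measure_UNION_le sets.finite_UN sets.finite_INT)
      auto
  also have "\<dots> \<le> (\<Sum>t<m. \<Sum>\<sigma><p. exp (- (c * h * real q)))"
    using prob_block_misses_interval[OF block(1,2) bin] block(3)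
    by (intro sum_mono) (auto simp: bin_def algebra_simps)
  finally show ?thesis
    by simp
qed

lemma prob_max_err_gt_le:
  assumes lip: "L-lipschitz_on UNIV g" and "odd p"
    and "h > 0" "real m * h = b - a" "1 \<le> q" "p * q \<le> n" and small: "2 * L * h \<le> 1 / sqrt n"
  shows "prob {\<omega>\<in>space M. \<bar>max_err g (\<lambda>k. X k \<omega>) n p / (1 / sqrt (real n))\<bar> > 1}
    \<le> real m * real p * exp (- (c * h * real q))"
proof -
  have "n > 0"
    using \<open>1 \<le> q\<close> \<open>p * q \<le> n\<close> odd_pos[OF \<open>odd p\<close>] by (metis less_le_trans nat_0_less_mult_iff
        less_one not_le)
  have "{\<omega>\<in>space M. \<bar>max_err g (\<lambda>k. X k \<omega>) n p / (1 / sqrt (real n))\<bar> > 1}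
      \<subseteq> {\<omega>\<in>space M. \<not> well_spread (\<lambda>k. X k \<omega>) n p a h m}"
  proof safe
    fix \<omega> assume gt: "\<bar>max_err g (\<lambda>k. X k \<omega>) n p / (1 / sqrt (real n))\<bar> > 1"
      and "well_spread (\<lambda>k. X k \<omega>) n p a h m"
    then have "max_err g (\<lambda>k. X k \<omega>) n p \<le> 1 / sqrt n"
      using max_err_le[OF _ \<open>h > 0\<close> \<open>odd p\<close> lip] small by force
    moreover have "0 \<le> max_err g (\<lambda>k. X k \<omega>) n p"
      unfolding max_err_def by (rule Max_ge) (auto simp: admissible_def)
    ultimately show False
      using gt \<open>n > 0\<close> by (simp add: field_simps)
  qed
  then have "prob {\<omega>\<in>space M. \<bar>max_err g (\<lambda>k. X k \<omega>) n p / (1 / sqrt (real n))\<bar> > 1}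
      \<le> prob {\<omega>\<in>space M. \<not> well_spread (\<lambda>k. X k \<omega>) n p a h m}"
    by (intro finite_measure_mono) measurable
  also have "\<dots> \<le> real m * real p * exp (- (c * h * real q))"
    using assms by (intro prob_not_well_spread_le)
  finally show ?thesis .
qed

lemma prob_max_err_gt_le_inverse_sqrt:
  assumes lip: "L-lipschitz_on UNIV g" and "odd p"
  shows "\<exists>G. \<forall>n\<ge>p. prob {\<omega>\<in>space M. \<bar>max_err g (\<lambda>k. X k \<omega>) n p / (1 / sqrt (real n))\<bar> > 1}
    \<le> G / sqrt n"
proof -
  define L' where "L' = max L 1"
  define d where "d = b - a"
  define A where "A = 2 * L' * d + 1"
  define G where "G = 2 * A * p * exp (c * d / A) / (c * d / (A * p))\<^sup>2"
  have lip': "L'-lipschitz_on UNIV g"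
    using lip by (rule lipschitz_on_mono) (auto simp: L'_def)
  have "L' \<ge> 1" "d > 0" "A \<ge> 1" "p > 0"
    using a_less_b odd_pos[OF \<open>odd p\<close>] by (auto simp: L'_def d_def A_def)
  have "prob {\<omega>\<in>space M. \<bar>max_err g (\<lambda>k. X k \<omega>) n p / (1 / sqrt (real n))\<bar> > 1} \<le> G / sqrt n"
    if "p \<le> n" for n
  proof -
    define s where "s = sqrt (real n)"
    define m where "m = nat \<lceil>2 * L' * d * s\<rceil>"
    define h where "h = d / real m"
    define q where "q = n div p"
    have "s \<ge> 1" "s\<^sup>2 = real n"
      using \<open>p \<le> n\<close> \<open>p > 0\<close> by (auto simp: s_def)
    have "0 < 2 * L' * d * s"
      using \<open>L' \<ge> 1\<close> \<open>d > 0\<close> \<open>s \<ge> 1\<close> by simp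
    then have m: "2 * L' * d * s \<le> real m" "real m \<le> A * s"
      unfolding m_def A_def using \<open>s \<ge> 1\<close> of_int_ceiling_le_add_one[of "2 * L' * d * s"]
      by (auto simp: algebra_simps)
    then have "real m > 0"
      using \<open>0 < 2 * L' * d * s\<close> by linarith
    then have "h > 0" "real m * h = b - a"
      using \<open>d > 0\<close> by (auto simp: h_def d_def)
    have "2 * L' * h \<le> 1 / sqrt n"
      using m(1) \<open>real m > 0\<close> \<open>d > 0\<close> \<open>L' \<ge> 1\<close> \<open>s \<ge> 1\<close> unfolding h_def s_def[symmetric]
      by (simp add: field_simps)
    have "1 \<le> q" "p * q \<le> n"
      using \<open>p \<le> n\<close> \<open>p > 0\<close> by (auto simp: q_def div_greater_zero_iff Suc_le_eq)
    have "real q \<ge> s\<^sup>2 / real p - 1"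
      using real_of_int_floor_gt_diff_one[of "real n / real p"] \<open>s\<^sup>2 = real n\<close>
      unfolding q_def floor_divide_of_nat_eq by simp
    have "prob {\<omega>\<in>space M. \<bar>max_err g (\<lambda>k. X k \<omega>) n p / (1 / sqrt (real n))\<bar> > 1}
        \<le> real m * real p * exp (- (c * h * real q))"
      by (rule prob_max_err_gt_le[OF lip' \<open>odd p\<close>]) fact+
    also have "\<dots> \<le> G / s"
      unfolding h_def G_def using mul_exp_neg_le_div[OF \<open>s \<ge> 1\<close> c_pos \<open>d > 0\<close> _ \<open>A \<ge> 1\<close>] m
        \<open>real m > 0\<close> \<open>real q \<ge> _\<close> \<open>p \<le> n\<close> \<open>p > 0\<close> \<open>s\<^sup>2 = real n\<close>
      by (simp add: mult.assoc)
    finally show ?thesis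
      unfolding s_def .
  qed
  then show ?thesis
    by blast
qed

end

theorem lemma5:
  fixes M :: "'a measure" and X :: "nat \<Rightarrow> 'a \<Rightarrow> real" and f :: "real \<Rightarrow> ennreal"
    and g :: "real \<Rightarrow> real" and p :: nat and a b c L :: real
  assumes "prob_space M"
    and "prob_space.indep_vars M (\<lambda>_. borel) X UNIV"
    and "\<And>k. distributed M lborel (X k) f"
    and "a < b" and "c > 0"
    and "\<And>x. x \<in> {a..b} \<Longrightarrow> f x \<ge> ennreal c"
    and "\<And>x. x \<notin> {a..b} \<Longrightarrow> f x = 0"
    and "odd p" and "p \<ge> 3"
    and "L-lipschitz_on UNIV g"
  shows "big_Op M (\<lambda>n \<omega>. max_err g (\<lambda>k. X k \<omega>) n p) (\<lambda>n. 1 / sqrt (real n))"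
proof -
  interpret iid_bounded_density M X f a b c
    using assms(1-7) by (simp add: iid_bounded_density_def iid_bounded_density_axioms_def)
  obtain G where G: "\<And>n. p \<le> n \<Longrightarrow>
      prob {\<omega>\<in>space M. \<bar>max_err g (\<lambda>k. X k \<omega>) n p / (1 / sqrt (real n))\<bar> > 1} \<le> G / sqrt n"
    using prob_max_err_gt_le_inverse_sqrt[OF assms(10,8)] by blast
  have lim: "(\<lambda>n. G / sqrt (real n)) \<longlonglongrightarrow> 0"
    by (intro tendsto_divide_0[OF tendsto_const] filterlim_at_top_imp_at_infinity
        filterlim_compose[OF sqrt_at_top filterlim_real_sequentially])
  show ?thesis
    unfolding big_Op_def bounded_in_prob_def
  proof (intro allI impI exI[of _ 1])
    fix \<epsilon> :: real assume "\<epsilon> > 0"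
    with lim have "eventually (\<lambda>n. G / sqrt (real n) < \<epsilon>) sequentially"
      by (rule order_tendstoD)
    with eventually_ge_at_top[of p]
    show "eventually (\<lambda>n. prob {\<omega>\<in>space M. \<bar>max_err g (\<lambda>k. X k \<omega>) n p / (1 / sqrt (real n))\<bar> > 1}
        < \<epsilon>) sequentially"
      by eventually_elim (rule le_less_trans[OF G]; assumption)
  qed
qed

end
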